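(* On $\mathbb{R}^6$ with coordinates $(q_1,q_2,q_3,p_1,p_2,p_3)$ let $J_2=\begin{pmatrix}0&I_3\\-I_3&0\end{pmatrix}$ and let $J_3$ be the antisymmetric matrix (rows/columns ordered $q_1,q_2,q_3,p_1,p_2,p_3$) with upper-triangular entries $(J_3)_{12}=(J_3)_{13}=(J_3)_{14}=-e^{p_1}$, $(J_3)_{15}=(J_3)_{16}=0$, $(J_3)_{23}=-e^{p_2}$, $(J_3)_{24}=-e^{q_2-q_1}$, $(J_3)_{25}=-e^{p_2}+e^{q_2-q_1}$, $(J_3)_{26}=0$, $(J_3)_{34}=-e^{q_2-q_1}$, $(J_3)_{35}=e^{q_2-q_1}-e^{q_3-q_2}$, $(J_3)_{36}=-e^{p_3}+e^{q_3-q_2}$, $(J_3)_{45}=e^{q_2-q_1}$, $(J_3)_{46}=0$, $(J_3)_{56}=e^{q_3-q_2}$. Let $\mathcal{N}=J_2J_3^{-1}$ and $J_1=\mathcal{N}J_2$. Let $\Phi:\mathbb{R}^6\to\mathbb{R}^5$ be given by $u_1=-e^{p_1}$, $u_3=-e^{p_2}$, $u_5=-e^{p_3}$, $u_2=e^{q_2-q_1}$, $u_4=e^{q_3-q_2}$. Then $\Phi$ maps $J_1$ to the Poisson bracket $\pi_1$ on $\mathbb{R}^5$ (i.e. $\{f\circ\Phi,g\circ\Phi\}_{J_1}=\{f,g\}_{\pi_1}\circ\Phi$) given by $\{u_1,u_2\}=u_2$, $\{u_1,u_3\}=-u_2$, $\{u_1,u_4\}=\frac{u_2u_4}{u_3}$,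 $\{u_1,u_5\}=-\frac{u_2u_4}{u_3}$, $\{u_2,u_3\}=u_2$, $\{u_2,u_4\}=-\frac{u_2u_4}{u_3}$, $\{u_2,u_5\}=\frac{u_2u_4}{u_3}$, $\{u_3,u_4\}=u_4$, $\{u_3,u_5\}=-u_4$, $\{u_4,u_5\}=u_4$.
   Context: A bracket given by an antisymmetric matrix $J$ on $\mathbb{R}^m$ with coordinates $x_k$ is $\{f,g\}_J=\sum_{k,l}J_{kl}\,\partial_{x_k}f\,\partial_{x_l}g$. *)

theory Defs
  imports "HOL-Analysis.Analysis" "HOL-Library.Numeral_Type"
begin

definition pdiff :: "(real^'n \<Rightarrow> real) \<Rightarrow> real^'n \<Rightarrow> 'n \<Rightarrow> real" where
  "pdiff f x k = frechet_derivative f (at x) (axis k 1)"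

definition pbracket ::
  "(real^'n \<Rightarrow> real^'n^'n) \<Rightarrow> (real^'n \<Rightarrow> real) \<Rightarrow> (real^'n \<Rightarrow> real) \<Rightarrow> real^'n \<Rightarrow> real" where
  "pbracket J f g x = (\<Sum>k\<in>UNIV. \<Sum>l\<in>UNIV. J x $ k $ l * pdiff f x k * pdiff g x l)"

text \<open>Coordinate numbering 1..6 on real^6 (q1,q2,q3,p1,p2,p3); note (6::6) = 0.\<close>
definition idx6 :: "6 \<Rightarrow> nat" where
  "idx6 a = (if a = 1 then 1 else if a = 2 then 2 else if a = 3 then 3
             else if a = 4 then 4 else if a = 5 then 5 else 6)"

definition idx5 :: "5 \<Rightarrow> nat" where
  "idx5 a = (if a = 1 then 1 else if a = 2 then 2 else if a = 3 then 3
             else if a = 4 then 4 else 5)"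

definition q1 :: "real^6 \<Rightarrow> real" where "q1 x = x $ 1"
definition q2 :: "real^6 \<Rightarrow> real" where "q2 x = x $ 2"
definition q3 :: "real^6 \<Rightarrow> real" where "q3 x = x $ 3"
definition p1 :: "real^6 \<Rightarrow> real" where "p1 x = x $ 4"
definition p2 :: "real^6 \<Rightarrow> real" where "p2 x = x $ 5"
definition p3 :: "real^6 \<Rightarrow> real" where "p3 x = x $ 6"

definition J2 :: "real^6^6" where
  "J2 = (\<chi> a b. if idx6 a \<le> 3 \<and> idx6 b = idx6 a + 3 then 1
               else if idx6 a \<ge> 4 \<and> idx6 a = idx6 b + 3 then -1 else 0)"

definition J3u :: "real^6 \<Rightarrow> nat \<Rightarrow> nat \<Rightarrow> real" where
  "J3u x i j =
    (if (i, j) = (1,2) \<or> (i, j) = (1,3) \<or> (i, j) = (1,4) then - exp (p1 x)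
     else if (i, j) = (2,3) then - exp (p2 x)
     else if (i, j) = (2,4) then - exp (q2 x - q1 x)
     else if (i, j) = (2,5) then - exp (p2 x) + exp (q2 x - q1 x)
     else if (i, j) = (3,4) then - exp (q2 x - q1 x)
     else if (i, j) = (3,5) then exp (q2 x - q1 x) - exp (q3 x - q2 x)
     else if (i, j) = (3,6) then - exp (p3 x) + exp (q3 x - q2 x)
     else if (i, j) = (4,5) then exp (q2 x - q1 x)
     else if (i, j) = (5,6) then exp (q3 x - q2 x)
     else 0)"

definition J3 :: "real^6 \<Rightarrow> real^6^6" where
  "J3 x = (\<chi> a b. if idx6 a < idx6 b then J3u x (idx6 a) (idx6 b)
                  else if idx6 b < idx6 a then - J3u x (idx6 b) (idx6 a) else 0)"

definition NN :: "real^6 \<Rightarrow> real^6^6" where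
  "NN x = J2 ** matrix_inv (J3 x)"

definition J1 :: "real^6 \<Rightarrow> real^6^6" where
  "J1 x = NN x ** J2"

definition Phi :: "real^6 \<Rightarrow> real^5" where
  "Phi x = (\<chi> a. if idx5 a = 1 then - exp (p1 x)
                 else if idx5 a = 2 then exp (q2 x - q1 x)
                 else if idx5 a = 3 then - exp (p2 x)
                 else if idx5 a = 4 then exp (q3 x - q2 x)
                 else - exp (p3 x))"

definition pi1u :: "real^5 \<Rightarrow> nat \<Rightarrow> nat \<Rightarrow> real" where
  "pi1u u i j =
    (let u2 = u $ 2; u3 = u $ 3; u4 = u $ 4 in
     if (i, j) = (1,2) then u2
     else if (i, j) = (1,3) then - u2
     else if (i, j) = (1,4) then u2 * u4 / u3
     else if (i, j) = (1,5) then - (u2 * u4 / u3)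
     else if (i, j) = (2,3) then u2
     else if (i, j) = (2,4) then - (u2 * u4 / u3)
     else if (i, j) = (2,5) then u2 * u4 / u3
     else if (i, j) = (3,4) then u4
     else if (i, j) = (3,5) then - u4
     else if (i, j) = (4,5) then u4
     else 0)"

definition pi1 :: "real^5 \<Rightarrow> real^5^5" where
  "pi1 u = (\<chi> a b. if idx5 a < idx5 b then pi1u u (idx5 a) (idx5 b)
                  else if idx5 b < idx5 a then - pi1u u (idx5 b) (idx5 a) else 0)"

end

theory Submission
  imports Defs
begin

text \<open>By the chain rule, \<open>{f \<circ> \<Phi>, g \<circ> \<Phi>}\<^sub>J (x) = \<nabla>f \<bullet> (D J(x) D\<^sup>T \<nabla>g)\<close> with the
  gradients taken at \<open>\<Phi> x\<close> and \<open>D\<close> the Jacobian of \<open>\<Phi>\<close> at \<open>x\<close>. So it suffices to show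
  \<open>D J\<^sub>1(x) D\<^sup>T = \<pi>\<^sub>1(\<Phi> x)\<close>. With \<open>a = exp p\<^sub>1, b = exp p\<^sub>2, c = exp p\<^sub>3,
  s = exp (q\<^sub>2 - q\<^sub>1), t = exp (q\<^sub>3 - q\<^sub>2)\<close> we have \<open>\<Phi> = (-a, s, -b, t, -c)\<close>, and the entries
  of \<open>J\<^sub>3\<close>, of \<open>D\<close>, and also of \<open>abc J\<^sub>3\<^sup>-\<^sup>1\<close> and \<open>abc J\<^sub>1\<close> are polynomials in \<open>a, b, c, s, t\<close>.
  Once \<open>J\<^sub>3\<^sup>-\<^sup>1\<close> is written down explicitly, everything is an identity of rational
  functions in these five positive quantities.\<close>

lemma exhaust_5:
  fixes x :: 5
  shows "x = 1 \<or> x = 2 \<or> x = 3 \<or> x = 4 \<or> x = 5"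
proof (induct x)
  case (of_int z)
  then have "z = 0 \<or> z = 1 \<or> z = 2 \<or> z = 3 \<or> z = 4" by fastforce
  then show ?case by auto
qed

lemma exhaust_6:
  fixes x :: 6
  shows "x = 1 \<or> x = 2 \<or> x = 3 \<or> x = 4 \<or> x = 5 \<or> x = 6"
proof (induct x)
  case (of_int z)
  then have "z = 0 \<or> z = 1 \<or> z = 2 \<or> z = 3 \<or> z = 4 \<or> z = 5" by fastforce
  then show ?case by auto
qed

lemma forall_5: "(\<forall>i::5. P i) \<longleftrightarrow> P 1 \<and> P 2 \<and> P 3 \<and> P 4 \<and> P 5"
  by (metis exhaust_5)

lemma forall_6: "(\<forall>i::6. P i) \<longleftrightarrow> P 1 \<and> P 2 \<and> P 3 \<and> P 4 \<and> P 5 \<and> P 6"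
  by (metis exhaust_6)

lemma UNIV_6: "UNIV = {1, 2, 3, 4, 5, 6::6}"
  using exhaust_6 by auto

lemma sum_6: "sum f (UNIV::6 set) = f 1 + f 2 + f 3 + f 4 + f 5 + f 6"
  unfolding UNIV_6 by (simp add: ac_simps)

lemma idx5_simps [simp]: "idx5 1 = 1" "idx5 2 = 2" "idx5 3 = 3" "idx5 4 = 4" "idx5 5 = 5"
  by (simp_all add: idx5_def)

lemma idx6_simps [simp]:
  "idx6 1 = 1" "idx6 2 = 2" "idx6 3 = 3" "idx6 4 = 4" "idx6 5 = 5" "idx6 6 = 6"
  by (simp_all add: idx6_def)

lemma matrix_inv_eqI:
  fixes A :: "'a::semiring_1^'n^'n"
  assumes "A ** B = mat 1" and "B ** A = mat 1"
  shows "matrix_inv A = B"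
  unfolding matrix_inv_def
proof (rule some_equality)
  fix C assume "A ** C = mat 1 \<and> C ** A = mat 1"
  then show "C = B"
    by (metis assms(1) matrix_mul_assoc matrix_mul_lid matrix_mul_rid)
qed (use assms in blast)

lemma matrix_mul_transpose_nth:
  fixes A :: "'a::comm_semiring_1^'n^'m"
  shows "(A ** B ** transpose C) $ i $ j = (\<Sum>k\<in>UNIV. A $ i $ k * (\<Sum>l\<in>UNIV. C $ j $ l * B $ k $ l))"
  unfolding matrix_mul_assoc[symmetric]
  by (simp add: matrix_matrix_mult_def transpose_def mult.commute[of "B $ k $ l" "C $ j $ l" for k l])

lemma has_derivative_vec_componentwise:
  fixes f :: "'a::real_normed_vector \<Rightarrow> real^'n"
  shows "(f has_derivative f') (at x within S) \<longleftrightarrow>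
         (\<forall>i. ((\<lambda>y. f y $ i) has_derivative (\<lambda>h. f' h $ i)) (at x within S))"
  by (simp add: has_derivative_componentwise_within[of f] Basis_vec_def inner_axis)

lemma has_derivative_vec_nth: "((\<lambda>x. x $ i) has_derivative (\<lambda>h. h $ i)) F"
  using bounded_linear.has_derivative[OF bounded_linear_vec_nth has_derivative_ident] .

definition pgrad :: "(real^'n \<Rightarrow> real) \<Rightarrow> real^'n \<Rightarrow> real^'n" where
  "pgrad f x = (\<chi> k. pdiff f x k)"

lemma pbracket_eq_inner: "pbracket J f g x = pgrad f x \<bullet> (J x *v pgrad g x)"
  by (simp add: pbracket_def pgrad_def inner_vec_def matrix_vector_mult_def sum_distrib_left mult_ac)

lemma linear_eq_inner_axis:
  fixes L :: "real^'n \<Rightarrow> real"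
  assumes "linear L"
  shows "L v = (\<chi> i. L (axis i 1)) \<bullet> v"
proof -
  have "L v = L (\<Sum>i\<in>UNIV. v $ i *\<^sub>R axis i 1)"
    using basis_expansion[of v] by (simp add: scalar_mult_eq_scaleR)
  also have "\<dots> = (\<Sum>i\<in>UNIV. v $ i * L (axis i 1))"
    using assms by (simp add: linear_sum linear_scale)
  also have "\<dots> = (\<chi> i. L (axis i 1)) \<bullet> v"
    by (simp add: inner_vec_def mult.commute)
  finally show ?thesis .
qed

lemma frechet_derivative_eq_inner_pgrad:
  assumes "f differentiable (at x)"
  shows "frechet_derivative f (at x) v = pgrad f x \<bullet> v"
proof -
  have "linear (frechet_derivative f (at x))"
    using assms frechet_derivative_works has_derivative_linear by blast
  then show ?thesis
    unfolding pgrad_def pdiff_def by (rule linear_eq_inner_axis)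
qed

lemma pgrad_comp:
  fixes \<Phi> :: "real^'n \<Rightarrow> real^'m"
  assumes \<Phi>: "(\<Phi> has_derivative (\<lambda>h. D *v h)) (at x)"
    and f: "f differentiable (at (\<Phi> x))"
  shows "pgrad (f \<circ> \<Phi>) x = transpose D *v pgrad f (\<Phi> x)"
proof -
  have "((f \<circ> \<Phi>) has_derivative (\<lambda>h. pgrad f (\<Phi> x) \<bullet> (D *v h))) (at x)"
    using diff_chain_at[OF \<Phi> f[unfolded frechet_derivative_works]]
    by (simp add: o_def frechet_derivative_eq_inner_pgrad[OF f])
  then have "pdiff (f \<circ> \<Phi>) x k = (pgrad f (\<Phi> x) v* D) \<bullet> axis k 1" for k
    by (simp add: pdiff_def frechet_derivative_at[symmetric] dot_lmul_matrix)
  then show ?thesis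
    by (simp add: vec_eq_iff pgrad_def inner_axis)
qed

lemma pbracket_comp:
  fixes \<Phi> :: "real^'n \<Rightarrow> real^'m"
  assumes \<Phi>: "(\<Phi> has_derivative (\<lambda>h. D *v h)) (at x)"
    and f: "f differentiable (at (\<Phi> x))" and g: "g differentiable (at (\<Phi> x))"
    and push: "D ** J x ** transpose D = P (\<Phi> x)"
  shows "pbracket J (f \<circ> \<Phi>) (g \<circ> \<Phi>) x = pbracket P f g (\<Phi> x)"
proof -
  have "pbracket J (f \<circ> \<Phi>) (g \<circ> \<Phi>) x
      = (pgrad f (\<Phi> x) v* D) \<bullet> (J x *v (transpose D *v pgrad g (\<Phi> x)))"
    by (simp add: pbracket_eq_inner pgrad_comp[OF \<Phi> f] pgrad_comp[OF \<Phi> g])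
  also have "\<dots> = pgrad f (\<Phi> x) \<bullet> ((D ** J x ** transpose D) *v pgrad g (\<Phi> x))"
    by (simp only: dot_lmul_matrix matrix_vector_mul_assoc matrix_mul_assoc)
  also have "\<dots> = pbracket P f g (\<Phi> x)"
    by (simp add: push pbracket_eq_inner)
  finally show ?thesis .
qed

definition skew6 :: "(nat \<Rightarrow> nat \<Rightarrow> real) \<Rightarrow> real^6^6" where
  "skew6 U = (\<chi> a b. if idx6 a < idx6 b then U (idx6 a) (idx6 b)
                     else if idx6 b < idx6 a then - U (idx6 b) (idx6 a) else 0)"

lemma J3_eq_skew6: "J3 x = skew6 (J3u x)"
  by (simp add: J3_def skew6_def)

definition J3_inv :: "real^6 \<Rightarrow> real^6^6" where
  "J3_inv x =
    (let a = exp (p1 x); b = exp (p2 x); c = exp (p3 x);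
         s = exp (q2 x - q1 x); t = exp (q3 x - q2 x)
     in skew6 (\<lambda>i j. (if (i, j) = (1,2) then c * s
                    else if (i, j) = (1,3) then - s * t
                    else if (i, j) = (1,4) then b * c - c * s + s * t
                    else if (i, j) = (1,5) then - c * s + s * t
                    else if (i, j) = (1,6) then s * t
                    else if (i, j) = (2,3) then a * t
                    else if (i, j) = (2,4) then - a * t
                    else if (i, j) = (2,5) then a * c - a * t
                    else if (i, j) = (2,6) then - a * t
                    else if (i, j) = (3,4) then a * t
                    else if (i, j) = (3,6) then a * b
                    else if (i, j) = (4,5) then - a * c + a * t
                    else if (i, j) = (4,6) then - a * b + a * t
                    else if (i, j) = (5,6) then - a * b
                    else 0) / (a * b * c)))"

lemma J3_mult_J3_inv: "J3 x ** J3_inv x = mat 1"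
  unfolding vec_eq_iff forall_6 matrix_matrix_mult_def mat_def
  by (simp add: sum_6 J3_eq_skew6 skew6_def J3u_def J3_inv_def Let_def field_simps)

lemma J3_inv_mult_J3: "J3_inv x ** J3 x = mat 1"
  unfolding vec_eq_iff forall_6 matrix_matrix_mult_def mat_def
  by (simp add: sum_6 J3_eq_skew6 skew6_def J3u_def J3_inv_def Let_def field_simps)

lemma matrix_inv_J3: "matrix_inv (J3 x) = J3_inv x"
  by (rule matrix_inv_eqI[OF J3_mult_J3_inv J3_inv_mult_J3])

definition J1_explicit :: "real^6 \<Rightarrow> real^6^6" where
  "J1_explicit x =
    (let a = exp (p1 x); b = exp (p2 x); c = exp (p3 x);
         s = exp (q2 x - q1 x); t = exp (q3 x - q2 x)
     in skew6 (\<lambda>i j. (if (i, j) = (1,2) then a * c - a * t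
                    else if (i, j) = (1,3) then a * b - a * t
                    else if (i, j) = (1,4) then - b * c + c * s - s * t
                    else if (i, j) = (1,5) then a * t
                    else if (i, j) = (1,6) then - a * t
                    else if (i, j) = (2,3) then a * b
                    else if (i, j) = (2,4) then c * s - s * t
                    else if (i, j) = (2,5) then - a * c + a * t
                    else if (i, j) = (3,4) then - s * t
                    else if (i, j) = (3,5) then a * t
                    else if (i, j) = (3,6) then - a * b
                    else if (i, j) = (4,5) then - c * s
                    else if (i, j) = (4,6) then s * t
                    else if (i, j) = (5,6) then - a * t
                    else 0) / (a * b * c)))"

lemma J1_eq_explicit: "J1 x = J1_explicit x"
  unfolding J1_def NN_def matrix_inv_J3 vec_eq_iff forall_6 matrix_matrix_mult_def
  by (simp add: sum_6 J2_def J3_inv_def J1_explicit_def skew6_def Let_def) (simp add: field_simps)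

definition Phi_jacobian :: "real^6 \<Rightarrow> real^6^5" where
  "Phi_jacobian x = (\<chi> i k.
     if idx5 i = 1 then (if idx6 k = 4 then - exp (p1 x) else 0)
     else if idx5 i = 2 then
       (if idx6 k = 1 then - exp (q2 x - q1 x) else if idx6 k = 2 then exp (q2 x - q1 x) else 0)
     else if idx5 i = 3 then (if idx6 k = 5 then - exp (p2 x) else 0)
     else if idx5 i = 4 then
       (if idx6 k = 2 then - exp (q3 x - q2 x) else if idx6 k = 3 then exp (q3 x - q2 x) else 0)
     else (if idx6 k = 6 then - exp (p3 x) else 0))"

lemma has_derivative_Phi: "(Phi has_derivative (\<lambda>h. Phi_jacobian x *v h)) (at x)"
  unfolding has_derivative_vec_componentwise forall_5
  by (simp add: Phi_def Phi_jacobian_def matrix_vector_mult_def sum_6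
      p1_def p2_def p3_def q1_def q2_def q3_def)
    (intro conjI; auto intro!: derivative_eq_intros has_derivative_vec_nth simp: algebra_simps)

lemma Phi_jacobian_row_sums:
  "(\<Sum>k\<in>UNIV. Phi_jacobian x $ 1 $ k * h k) = - exp (p1 x) * h 4"
  "(\<Sum>k\<in>UNIV. Phi_jacobian x $ 2 $ k * h k) = exp (q2 x - q1 x) * (h 2 - h 1)"
  "(\<Sum>k\<in>UNIV. Phi_jacobian x $ 3 $ k * h k) = - exp (p2 x) * h 5"
  "(\<Sum>k\<in>UNIV. Phi_jacobian x $ 4 $ k * h k) = exp (q3 x - q2 x) * (h 3 - h 2)"
  "(\<Sum>k\<in>UNIV. Phi_jacobian x $ 5 $ k * h k) = - exp (p3 x) * h 6"
  by (simp_all add: sum_6 Phi_jacobian_def algebra_simps)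

lemma Phi_jacobian_J1_transpose: "Phi_jacobian x ** J1 x ** transpose (Phi_jacobian x) = pi1 (Phi x)"
  unfolding vec_eq_iff forall_5 matrix_mul_transpose_nth Phi_jacobian_row_sums J1_eq_explicit
  by (simp add: J1_explicit_def skew6_def pi1_def pi1u_def Phi_def Let_def field_simps)

theorem mainTheorem3:
  fixes f g :: "real^5 \<Rightarrow> real"
  assumes "\<And>y. f differentiable (at y)"
      and "\<And>y. g differentiable (at y)"
  shows "\<forall>x. pbracket J1 (f \<circ> Phi) (g \<circ> Phi) x = pbracket pi1 f g (Phi x)"
  using pbracket_comp[where J = J1 and P = pi1, OF has_derivative_Phi assms Phi_jacobian_J1_transpose]
  by blast

end
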